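(* Let $A$ be a finite skew brace and let $\Lambda(x_1),\dots,\Lambda(x_k)$ be its $\lambda$-orbits of size greater than $1$. Then \[A^2=\Big\langle \bigcup_{i=1}^k\big(\Lambda(x_i)-\Lambda(x_i)\big)\Big\rangle_+,\] where $\Lambda(x_i)-\Lambda(x_i)=\{u-v: u,v\in\Lambda(x_i)\}$ and $\langle\cdot\rangle_+$ denotes the generated subgroup of $(A,+)$. In particular $|A^2|\ge|\Lambda(x_i)|$ for all $i$.
   Context: A skew brace is a triple $(A,+,\circ)$ where $(A,+)$ and $(A,\circ)$ are groups with $a\circ(b+c)=a\circ b-a+a\circ c$ for all $a,b,c$. $\lambda_a(b)=-a+a\circ b$; the $\lambda$-orbit of $x$ is $\Lambda(x)=\{\lambda_a(x):a\in A\}$. $A^2$ is the subgroup of $(A,+)$ generated by all $a*b=\lambda_a(b)-b$, $a,b\in A$. *)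

theory Defs
  imports "HOL-Algebra.Algebra"
begin

(* A skew brace: the additive group (A,+) is the HOL-Algebra group G
(its multiplication plays the role of +), the circle group (A,o)
is the HOL-Algebra group C on the same carrier. *)

definition skew_brace :: "('a, 'm) monoid_scheme \<Rightarrow> ('a, 'n) monoid_scheme \<Rightarrow> bool" where
  "skew_brace G C \<longleftrightarrow> group G \<and> group C \<and> carrier C = carrier G \<and>
     (\<forall>a\<in>carrier G. \<forall>b\<in>carrier G. \<forall>c\<in>carrier G.
        a \<otimes>\<^bsub>C\<^esub> (b \<otimes>\<^bsub>G\<^esub> c)
        = (a \<otimes>\<^bsub>C\<^esub> b) \<otimes>\<^bsub>G\<^esub> inv\<^bsub>G\<^esub> a \<otimes>\<^bsub>G\<^esub> (a \<otimes>\<^bsub>C\<^esub> c))"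

definition brace_lambda :: "('a, 'm) monoid_scheme \<Rightarrow> ('a, 'n) monoid_scheme \<Rightarrow> 'a \<Rightarrow> 'a \<Rightarrow> 'a" where
  "brace_lambda G C a b = inv\<^bsub>G\<^esub> a \<otimes>\<^bsub>G\<^esub> (a \<otimes>\<^bsub>C\<^esub> b)"

definition lambda_orbit :: "('a, 'm) monoid_scheme \<Rightarrow> ('a, 'n) monoid_scheme \<Rightarrow> 'a \<Rightarrow> 'a set" where
  "lambda_orbit G C x = {brace_lambda G C a x | a. a \<in> carrier G}"

definition brace_star :: "('a, 'm) monoid_scheme \<Rightarrow> ('a, 'n) monoid_scheme \<Rightarrow> 'a \<Rightarrow> 'a \<Rightarrow> 'a" where
  "brace_star G C a b = brace_lambda G C a b \<otimes>\<^bsub>G\<^esub> inv\<^bsub>G\<^esub> b"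

definition brace_sq :: "('a, 'm) monoid_scheme \<Rightarrow> ('a, 'n) monoid_scheme \<Rightarrow> 'a set" where
  "brace_sq G C = generate G {brace_star G C a b | a b. a \<in> carrier G \<and> b \<in> carrier G}"

definition set_diff_self :: "('a, 'm) monoid_scheme \<Rightarrow> 'a set \<Rightarrow> 'a set" where
  "set_diff_self G S = {(u \<otimes>\<^bsub>G\<^esub> (inv\<^bsub>G\<^esub> v)) | u v. u \<in> S \<and> v \<in> S}"

end

theory Submission
  imports Defs
begin

text \<open>
  The maps \<open>\<lambda>\<^sub>a\<close> form an action of the circle group on \<open>A\<close>, so for \<open>u = \<lambda>\<^sub>a x\<close> and
  \<open>v = \<lambda>\<^sub>c x\<close> in one orbit the difference \<open>u - v = \<lambda>\<^bsub>a \<circ> c\<inverse>\<^esub>(v) - v\<close> is a generator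
  \<open>(a \<circ> c\<inverse>) * v\<close> of \<open>A\<^sup>2\<close>. Conversely \<open>a * b = \<lambda>\<^sub>a(b) - b\<close> is a difference of two
  elements of \<open>\<Lambda>(b)\<close>, and it vanishes when that orbit is a singleton. Finally \<open>u \<mapsto> u - x\<close> embeds \<open>\<Lambda>(x)\<close> into \<open>\<Lambda>(x) - \<Lambda>(x) \<subseteq> A\<^sup>2\<close>.
\<close>

lemma (in group) generate_insert_one:
  assumes "H \<subseteq> carrier G"
  shows "generate G (insert \<one> H) = generate G H"
proof
  have "insert \<one> H \<subseteq> generate G H"
    by (auto intro: generate.one generate.incl)
  then show "generate G (insert \<one> H) \<subseteq> generate G H"
    by (rule generate_subgroup_incl[OF _ generate_is_subgroup[OF assms]])
  show "generate G H \<subseteq> generate G (insert \<one> H)"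
    by (rule mono_generate) blast
qed

lemma (in group) card_le_card_if_set_diff_self_subset:
  assumes "x \<in> S" and "S \<subseteq> carrier G" and "set_diff_self G S \<subseteq> H" and "finite H"
  shows "card S \<le> card H"
proof -
  have "inj_on (\<lambda>u. u \<otimes> inv x) S"
    using assms(1,2) by (intro inj_onI) (metis inv_closed r_cancel subsetD)
  moreover have "(\<lambda>u. u \<otimes> inv x) ` S \<subseteq> H"
    using assms(1,3) unfolding set_diff_self_def by blast
  ultimately show ?thesis
    using card_inj_on_le assms(4) by blast
qed

locale skew_brace_groups =
  G: group G + C: group C
  for G :: "('a, 'm) monoid_scheme" and C :: "('a, 'n) monoid_scheme" +
  assumes carrier_eq: "carrier C = carrier G"
    and brace_distrib: "\<lbrakk> a \<in> carrier G; b \<in> carrier G; c \<in> carrier G \<rbrakk> \<Longrightarrow>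
      a \<otimes>\<^bsub>C\<^esub> (b \<otimes>\<^bsub>G\<^esub> c) = (a \<otimes>\<^bsub>C\<^esub> b) \<otimes>\<^bsub>G\<^esub> inv\<^bsub>G\<^esub> a \<otimes>\<^bsub>G\<^esub> (a \<otimes>\<^bsub>C\<^esub> c)"

lemma skew_brace_imp_skew_brace_groups:
  "skew_brace G C \<Longrightarrow> skew_brace_groups G C"
  unfolding skew_brace_def skew_brace_groups_def skew_brace_groups_axioms_def by blast

context skew_brace_groups
begin

lemma C_closed [intro, simp]:
  "a \<in> carrier G \<Longrightarrow> b \<in> carrier G \<Longrightarrow> a \<otimes>\<^bsub>C\<^esub> b \<in> carrier G"
  using C.m_closed carrier_eq by auto

lemma C_inv_closed [intro, simp]: "a \<in> carrier G \<Longrightarrow> inv\<^bsub>C\<^esub> a \<in> carrier G"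
  using C.inv_closed carrier_eq by auto

lemma C_one_eq: "\<one>\<^bsub>C\<^esub> = \<one>\<^bsub>G\<^esub>"
proof -
  have one: "\<one>\<^bsub>C\<^esub> \<in> carrier G"
    using carrier_eq by auto
  have "\<one>\<^bsub>G\<^esub> = \<one>\<^bsub>C\<^esub> \<otimes>\<^bsub>C\<^esub> (\<one>\<^bsub>G\<^esub> \<otimes>\<^bsub>G\<^esub> \<one>\<^bsub>G\<^esub>)"
    using carrier_eq by simp
  also have "\<dots> = \<one>\<^bsub>G\<^esub> \<otimes>\<^bsub>G\<^esub> inv\<^bsub>G\<^esub> \<one>\<^bsub>C\<^esub> \<otimes>\<^bsub>G\<^esub> \<one>\<^bsub>G\<^esub>"
    using brace_distrib[OF one G.one_closed G.one_closed] carrier_eq by simp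
  finally have "\<one>\<^bsub>G\<^esub> = inv\<^bsub>G\<^esub> \<one>\<^bsub>C\<^esub>"
    using one by simp
  then show ?thesis
    using one by (metis G.inv_inv G.inv_one)
qed

lemma C_l_one [simp]: "a \<in> carrier G \<Longrightarrow> \<one>\<^bsub>G\<^esub> \<otimes>\<^bsub>C\<^esub> a = a"
  using C.l_one carrier_eq by (simp flip: C_one_eq)

lemma C_r_one [simp]: "a \<in> carrier G \<Longrightarrow> a \<otimes>\<^bsub>C\<^esub> \<one>\<^bsub>G\<^esub> = a"
  using C.r_one carrier_eq by (simp flip: C_one_eq)

lemma lambda_closed [intro, simp]:
  "a \<in> carrier G \<Longrightarrow> x \<in> carrier G \<Longrightarrow> brace_lambda G C a x \<in> carrier G"
  unfolding brace_lambda_def by simp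

lemma lambda_one: "x \<in> carrier G \<Longrightarrow> brace_lambda G C \<one>\<^bsub>G\<^esub> x = x"
  by (simp add: brace_lambda_def)

lemma lambda_mult:
  assumes a: "a \<in> carrier G" and b: "b \<in> carrier G" and x: "x \<in> carrier G"
  shows "brace_lambda G C a (brace_lambda G C b x) = brace_lambda G C (a \<otimes>\<^bsub>C\<^esub> b) x"
proof -
  \<comment> \<open>Expand \<open>a \<circ> (b \<circ> x) = a \<circ> (b + \<lambda>\<^sub>b x)\<close> by the brace identity.\<close>
  have "(a \<otimes>\<^bsub>C\<^esub> b) \<otimes>\<^bsub>C\<^esub> x = a \<otimes>\<^bsub>C\<^esub> (b \<otimes>\<^bsub>G\<^esub> brace_lambda G C b x)"
    using a b x carrier_eq
    by (simp add: C.m_assoc brace_lambda_def G.m_assoc[symmetric] G.r_inv)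
  also have "\<dots> = (a \<otimes>\<^bsub>C\<^esub> b) \<otimes>\<^bsub>G\<^esub> (inv\<^bsub>G\<^esub> a \<otimes>\<^bsub>G\<^esub> (a \<otimes>\<^bsub>C\<^esub> brace_lambda G C b x))"
    using a b x by (simp add: brace_distrib G.m_assoc)
  finally show ?thesis
    using a b x by (simp add: brace_lambda_def G.m_assoc[symmetric] G.l_inv)
qed

lemma lambda_orbit_eq_image: "lambda_orbit G C x = (\<lambda>a. brace_lambda G C a x) ` carrier G"
  unfolding lambda_orbit_def by auto

lemma lambda_orbit_subset: "x \<in> carrier G \<Longrightarrow> lambda_orbit G C x \<subseteq> carrier G"
  unfolding lambda_orbit_eq_image by auto

lemma self_in_lambda_orbit: "x \<in> carrier G \<Longrightarrow> x \<in> lambda_orbit G C x"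
  unfolding lambda_orbit_eq_image using lambda_one by (metis G.one_closed image_eqI)

lemma brace_stars_subset_carrier:
  "{brace_star G C a b | a b. a \<in> carrier G \<and> b \<in> carrier G} \<subseteq> carrier G"
  unfolding brace_star_def by auto

lemma set_diff_self_lambda_orbit_subset_brace_stars:
  assumes x: "x \<in> carrier G"
  shows "set_diff_self G (lambda_orbit G C x)
           \<subseteq> {brace_star G C a b | a b. a \<in> carrier G \<and> b \<in> carrier G}"
proof
  fix w assume "w \<in> set_diff_self G (lambda_orbit G C x)"
  then obtain a c where a: "a \<in> carrier G" and c: "c \<in> carrier G"
    and w: "w = brace_lambda G C a x \<otimes>\<^bsub>G\<^esub> inv\<^bsub>G\<^esub> brace_lambda G C c x"
    unfolding set_diff_self_def lambda_orbit_def by blast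
  have "brace_lambda G C (a \<otimes>\<^bsub>C\<^esub> inv\<^bsub>C\<^esub> c) (brace_lambda G C c x)
          = brace_lambda G C a x"
    using a c x carrier_eq
    by (simp add: lambda_mult C.m_assoc C.l_inv C_one_eq lambda_one)
  then have "w = brace_star G C (a \<otimes>\<^bsub>C\<^esub> inv\<^bsub>C\<^esub> c) (brace_lambda G C c x)"
    unfolding brace_star_def w by simp
  then show "w \<in> {brace_star G C a b | a b. a \<in> carrier G \<and> b \<in> carrier G}"
    using a c x by blast
qed

lemma brace_stars_subset_insert_one_orbit_diffs:
  assumes "finite (carrier G)"
  shows "{brace_star G C a b | a b. a \<in> carrier G \<and> b \<in> carrier G}
           \<subseteq> insert \<one>\<^bsub>G\<^esub> (\<Union>x \<in> {x \<in> carrier G. card (lambda_orbit G C x) > 1}.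
                                set_diff_self G (lambda_orbit G C x))"
proof
  fix w assume "w \<in> {brace_star G C a b | a b. a \<in> carrier G \<and> b \<in> carrier G}"
  then obtain a b where a: "a \<in> carrier G" and b: "b \<in> carrier G"
    and w: "w = brace_star G C a b"
    by blast
  show "w \<in> insert \<one>\<^bsub>G\<^esub> (\<Union>x \<in> {x \<in> carrier G. card (lambda_orbit G C x) > 1}.
                                    set_diff_self G (lambda_orbit G C x))"
  proof (cases "brace_lambda G C a b = b")
    case True
    then show ?thesis
      using b w by (simp add: brace_star_def)
  next
    case moved: False
    have b_in: "b \<in> lambda_orbit G C b" and ab_in: "brace_lambda G C a b \<in> lambda_orbit G C b"
      using a b self_in_lambda_orbit unfolding lambda_orbit_def by auto
    have "finite (lambda_orbit G C b)"
      using assms unfolding lambda_orbit_eq_image by simp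
    then have "\<not> card (lambda_orbit G C b) \<le> Suc 0"
      using card_le_Suc0_iff_eq b_in ab_in moved by blast
    moreover have "w \<in> set_diff_self G (lambda_orbit G C b)"
      using b_in ab_in unfolding w brace_star_def set_diff_self_def by blast
    ultimately show ?thesis
      using b by auto
  qed
qed

lemma brace_sq_eq_generate_orbit_diffs:
  assumes "finite (carrier G)"
  shows "brace_sq G C = generate G (\<Union>x \<in> {x \<in> carrier G. card (lambda_orbit G C x) > 1}.
                                     set_diff_self G (lambda_orbit G C x))"
    (is "_ = generate G ?diffs")
proof -
  let ?stars = "{brace_star G C a b | a b. a \<in> carrier G \<and> b \<in> carrier G}"
  have diffs_stars: "?diffs \<subseteq> ?stars"
    using set_diff_self_lambda_orbit_subset_brace_stars by blast
  have "generate G ?stars \<subseteq> generate G (insert \<one>\<^bsub>G\<^esub> ?diffs)"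
    by (rule G.mono_generate[OF brace_stars_subset_insert_one_orbit_diffs[OF assms]])
  also have "\<dots> = generate G ?diffs"
    using diffs_stars brace_stars_subset_carrier by (intro G.generate_insert_one) blast
  finally have "generate G ?stars \<subseteq> generate G ?diffs" .
  moreover have "generate G ?diffs \<subseteq> generate G ?stars"
    by (rule G.mono_generate[OF diffs_stars])
  ultimately show ?thesis
    unfolding brace_sq_def by (rule antisym)
qed

lemma card_lambda_orbit_le_card_brace_sq:
  assumes "finite (carrier G)" and x: "x \<in> carrier G"
  shows "card (lambda_orbit G C x) \<le> card (brace_sq G C)"
proof (rule G.card_le_card_if_set_diff_self_subset[OF self_in_lambda_orbit[OF x]
      lambda_orbit_subset[OF x]])
  show "set_diff_self G (lambda_orbit G C x) \<subseteq> brace_sq G C"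
    unfolding brace_sq_def using set_diff_self_lambda_orbit_subset_brace_stars[OF x]
    by (auto intro: generate.incl)
  show "finite (brace_sq G C)"
    unfolding brace_sq_def
    using G.generate_incl[OF brace_stars_subset_carrier] assms(1) by (rule finite_subset)
qed

end

theorem mainTheorem6:
  fixes G :: "('a, 'm) monoid_scheme" and C :: "('a, 'n) monoid_scheme"
  assumes "skew_brace G C"
    and "finite (carrier G)"
  shows "brace_sq G C =
           generate G (\<Union>x \<in> {x \<in> carrier G. card (lambda_orbit G C x) > 1}.
                          set_diff_self G (lambda_orbit G C x))
         \<and> (\<forall>x \<in> carrier G. card (lambda_orbit G C x) > 1 \<longrightarrow>
              card (brace_sq G C) \<ge> card (lambda_orbit G C x))"
proof -
  interpret skew_brace_groups G C
    using assms(1) by (rule skew_brace_imp_skew_brace_groups)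
  show ?thesis
    using brace_sq_eq_generate_orbit_diffs card_lambda_orbit_le_card_brace_sq assms(2)
    by blast
qed

end
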